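(* Let $N\in\mathbb N$ and $\mu\in(k-1,k)$ with $k\in\{1,2\}$. For every $f\in{}_0\mathcal P_N$, the problem $$ {}^R\hat D_-^\mu u(x)=f(x),\qquad u(-1)=0, $$ has a unique solution $u\in{}_0\mathcal P_N$, namely $u(x)=I_-^\mu\{(1+x)^{-\mu}f(x)\}$. Moreover, for every $u\in\mathcal P_N$, $({}^R\hat D_-^\mu u)(-1)=0$ if and only if $u(-1)=0$.
   Context: For $\rho>0$, $(I_-^\rho u)(x)=\frac{1}{\Gamma(\rho)}\int_{-1}^x (x-y)^{\rho-1}u(y)\,dy$, $D^k=d^k/dx^k$; for $\mu\in(k-1,k)$ the Riemann–Liouville derivative is ${}^R D_-^\mu u=D^k(I_-^{k-\mu}u)$, and ${}^R\hat D_-^\mu u=(1+x)^\mu\,{}^R D_-^\mu u$, which for $u\in\mathcal P_N$ is a polynomial (its value at $-1$ is that of the polynomial). $\mathcal P_N$ denotes polynomials of degree $\le N$ and ${}_0\mathcal P_N=\{\phi\in\mathcal P_N:\phi(-1)=0\}$. *)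

theory Defs
  imports "HOL-Analysis.Analysis" "HOL-Computational_Algebra.Polynomial"
begin

definition RL_int :: "real \<Rightarrow> (real \<Rightarrow> real) \<Rightarrow> real \<Rightarrow> real" where
  "RL_int \<rho> u x = integral {-1..x} (\<lambda>y. (x - y) powr (\<rho> - 1) * u y) / Gamma \<rho>"

definition RL_deriv :: "nat \<Rightarrow> real \<Rightarrow> (real \<Rightarrow> real) \<Rightarrow> real \<Rightarrow> real" where
  "RL_deriv k \<mu> u x = (deriv ^^ k) (RL_int (real k - \<mu>) u) x"

definition RL_hat_deriv :: "nat \<Rightarrow> real \<Rightarrow> (real \<Rightarrow> real) \<Rightarrow> real \<Rightarrow> real" where
  "RL_hat_deriv k \<mu> u x = (1 + x) powr \<mu> * RL_deriv k \<mu> u x"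

end

theory Submission
  imports Defs
begin

text \<open>In the basis \<open>(1 + x)^j\<close> everything is explicit. The Beta integral gives
  \<open>I_-^\<rho> (1 + x)^b = \<Gamma>(b + 1) / \<Gamma>(b + 1 + \<rho>) (1 + x)^(b + \<rho>)\<close>, so the scaled
  Riemann--Liouville derivative acts diagonally, \<open>(1 + x)^j \<mapsto> \<lambda>\<^sub>j (1 + x)^j\<close> with
  \<open>\<lambda>\<^sub>j = \<Gamma>(j + 1) / \<Gamma>(j + 1 - \<mu>)\<close>, which is nonzero because \<open>\<mu>\<close> is not an integer.
  Hence the equation is solved coefficientwise, the value at \<open>-1\<close> (the coefficient of
  \<open>(1 + x)^0\<close>) is only rescaled, and applying \<open>I_-^\<mu>\<close> to \<open>(1 + x)^(-\<mu>) f\<close> divides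
  the coefficients of \<open>f\<close> by the \<open>\<lambda>\<^sub>j\<close> again.\<close>

definition shifted_poly :: "nat \<Rightarrow> (nat \<Rightarrow> real) \<Rightarrow> real poly" where
  "shifted_poly N c = (\<Sum>j\<le>N. monom (c j) j) \<circ>\<^sub>p [:1, 1:]"

definition shifted_coeff :: "real poly \<Rightarrow> nat \<Rightarrow> real" where
  "shifted_coeff p j = coeff (p \<circ>\<^sub>p [:-1, 1:]) j"

lemma poly_shifted_poly: "poly (shifted_poly N c) y = (\<Sum>j\<le>N. c j * (1 + y) ^ j)"
  by (simp add: shifted_poly_def poly_pcompose poly_sum poly_monom add.commute)

lemma poly_shifted_poly_minus_one: "poly (shifted_poly N c) (-1) = c 0"
  by (simp add: poly_shifted_poly zero_power sum.atMost_shift del: sum.atMost_Suc)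

lemma degree_shifted_poly_le: "degree (shifted_poly N c) \<le> N"
proof -
  have "degree (\<Sum>j\<le>N. monom (c j) j) \<le> N"
    by (rule degree_sum_le) (auto intro: order_trans[OF degree_monom_le])
  then show ?thesis
    by (simp add: shifted_poly_def degree_pcompose)
qed

lemma shifted_poly_shifted_coeff:
  assumes "degree p \<le> N"
  shows "shifted_poly N (shifted_coeff p) = p"
proof -
  have "degree (p \<circ>\<^sub>p [:-1, 1:]) \<le> N"
    using assms by (simp add: degree_pcompose)
  then have "(\<Sum>j\<le>N. monom (shifted_coeff p j) j) = p \<circ>\<^sub>p [:-1, 1:]"
    unfolding shifted_coeff_def by (rule poly_as_sum_of_monoms')
  then show ?thesis
    by (simp add: shifted_poly_def pcompose_pCons flip: pcompose_assoc)
qed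

lemma shifted_coeff_shifted_poly:
  assumes "j \<le> N"
  shows "shifted_coeff (shifted_poly N c) j = c j"
  using assms by (simp add: shifted_coeff_def shifted_poly_def pcompose_pCons coeff_sum flip: pcompose_assoc)

lemma shifted_coeff_0: "shifted_coeff p 0 = poly p (-1)"
  by (simp add: shifted_coeff_def poly_0_coeff_0 poly_pcompose)

lemma shifted_poly_eq_iff: "shifted_poly N c = shifted_poly N d \<longleftrightarrow> (\<forall>j\<le>N. c j = d j)"
  by (metis (no_types, lifting) atMost_iff shifted_coeff_shifted_poly shifted_poly_def sum.cong)

lemma poly_eqI_on_interval:
  fixes p q :: "real poly"
  assumes "a < b" and "\<And>x. x \<in> {a<..<b} \<Longrightarrow> poly p x = poly q x"
  shows "p = q"
proof (rule ccontr)
  assume "p \<noteq> q"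
  then have "finite {x. poly (p - q) x = 0}"
    by (intro poly_roots_finite) simp
  moreover have "{a<..<b} \<subseteq> {x. poly (p - q) x = 0}"
    using assms(2) by auto
  ultimately show False
    using assms(1) infinite_Ioo finite_subset by blast
qed

lemma has_integral_Beta_kernel:
  fixes a b x :: real
  assumes a: "a > -1" and b: "b > -1" and x: "x > -1"
  shows "((\<lambda>y. (x - y) powr a * (1 + y) powr b) has_integral
           Beta (b + 1) (a + 1) * (1 + x) powr (a + b + 1)) {-1..x}"
proof -
  define L where "L = 1 + x"
  have L: "L > 0" using x by (simp add: L_def)
  have B: "((\<lambda>t. t powr (b + 1 - 1) * (1 - t) powr (a + 1 - 1)) has_integral Beta (b + 1) (a + 1)) (cbox 0 1)"
    using has_integral_Beta_real[of "b + 1" "a + 1"] a b by simp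
  have "1/L > 0"
    using L by simp
  from has_integral_affinity'[OF B this, of "1/L"] L
  have "((\<lambda>y. ((1/L) * y + 1/L) powr b * (1 - ((1/L) * y + 1/L)) powr a) has_integral
          Beta (b + 1) (a + 1) * L) {-1..x}"
    by (simp add: field_simps L_def)
  then have "((\<lambda>y. L powr (a + b) * (((1/L) * y + 1/L) powr b * (1 - ((1/L) * y + 1/L)) powr a))
      has_integral Beta (b + 1) (a + 1) * (1 + x) powr (a + b + 1)) {-1..x}"
    using L by (auto dest: has_integral_mult_right[where c = "L powr (a + b)"]
        simp: powr_add L_def mult_ac)
  then show ?thesis
  proof (rule has_integral_eq[rotated])
    fix y assume "y \<in> {-1..x}"
    then have "L powr (a + b) * (((1 + y)/L) powr b * ((x - y)/L) powr a) = (x - y) powr a * (1 + y) powr b"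
      using L by (simp add: powr_divide powr_add field_simps)
    moreover have "(1/L) * y + 1/L = (1 + y)/L" "1 - (1 + y)/L = (x - y)/L"
      using L by (simp_all add: field_simps L_def)
    ultimately show "L powr (a + b) * (((1/L) * y + 1/L) powr b * (1 - ((1/L) * y + 1/L)) powr a)
        = (x - y) powr a * (1 + y) powr b"
      by simp
  qed
qed

lemma RL_int_sum_powers:
  fixes b c :: "'i \<Rightarrow> real"
  assumes "\<rho> > 0" "x > -1" "finite A" "\<And>j. j \<in> A \<Longrightarrow> b j > -1"
    and u: "\<And>y. y \<in> {-1<..x} \<Longrightarrow> u y = (\<Sum>j\<in>A. c j * (1 + y) powr b j)"
  shows "RL_int \<rho> u x = (\<Sum>j\<in>A. c j * Gamma (b j + 1) / Gamma (b j + 1 + \<rho>) * (1 + x) powr (b j + \<rho>))"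
proof -
  have "((\<lambda>y. \<Sum>j\<in>A. c j * ((x - y) powr (\<rho> - 1) * (1 + y) powr b j)) has_integral
      (\<Sum>j\<in>A. c j * (Beta (b j + 1) \<rho> * (1 + x) powr (b j + \<rho>)))) {-1..x}"
  proof (intro has_integral_sum has_integral_mult_right \<open>finite A\<close>)
    fix j assume "j \<in> A"
    then show "((\<lambda>y. (x - y) powr (\<rho> - 1) * (1 + y) powr b j) has_integral
        Beta (b j + 1) \<rho> * (1 + x) powr (b j + \<rho>)) {-1..x}"
      using has_integral_Beta_kernel[of "\<rho> - 1" "b j" x] assms by (simp add: algebra_simps)
  qed
  then have "((\<lambda>y. (x - y) powr (\<rho> - 1) * u y) has_integral
      (\<Sum>j\<in>A. c j * (Beta (b j + 1) \<rho> * (1 + x) powr (b j + \<rho>)))) {-1..x}"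
    by (rule has_integral_spike_finite[where S = "{-1}", rotated 2])
      (auto simp: u sum_distrib_left ac_simps)
  then have "integral {-1..x} (\<lambda>y. (x - y) powr (\<rho> - 1) * u y) =
      Gamma \<rho> * (\<Sum>j\<in>A. c j * Gamma (b j + 1) / Gamma (b j + 1 + \<rho>) * (1 + x) powr (b j + \<rho>))"
    by (simp add: integral_unique Beta_def sum_distrib_left ac_simps)
  then show ?thesis
    using Gamma_real_pos[OF \<open>\<rho> > 0\<close>] by (simp add: RL_int_def)
qed

lemma higher_deriv_sum_powers:
  fixes d e :: "'i \<Rightarrow> real"
  assumes "\<And>y. y > -1 \<Longrightarrow> F y = (\<Sum>j\<in>A. d j * (1 + y) powr e j)" and "x > -1"
  shows "(deriv ^^ n) F x = (\<Sum>j\<in>A. d j * pochhammer (e j - real n + 1) n * (1 + x) powr (e j - real n))"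
  using \<open>x > -1\<close>
proof (induction n arbitrary: x)
  case 0
  then show ?case using assms(1) by simp
next
  case (Suc n)
  have poch: "pochhammer (e j - real (Suc n) + 1) (Suc n) = (e j - real n) * pochhammer (e j - real n + 1) n" for j
    by (simp add: pochhammer_rec algebra_simps)
  have "((\<lambda>y. \<Sum>j\<in>A. d j * pochhammer (e j - real n + 1) n * (1 + y) powr (e j - real n))
      has_field_derivative (\<Sum>j\<in>A. d j * pochhammer (e j - real (Suc n) + 1) (Suc n) * (1 + x) powr (e j - real (Suc n)))) (at x)"
    using Suc.prems unfolding poch
    by (auto intro!: derivative_eq_intros DERIV_sum simp: algebra_simps diff_diff_add)
  then have "((deriv ^^ n) F has_field_derivative
      (\<Sum>j\<in>A. d j * pochhammer (e j - real (Suc n) + 1) (Suc n) * (1 + x) powr (e j - real (Suc n)))) (at x)"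
    by (rule has_field_derivative_transform_within_open[where S = "{-1<..}"]) (use Suc in auto)
  then show ?case
    by (simp add: DERIV_imp_deriv)
qed

definition RL_hat_eigenvalue :: "real \<Rightarrow> nat \<Rightarrow> real" where
  "RL_hat_eigenvalue \<mu> j = Gamma (real j + 1) / Gamma (real j + 1 - \<mu>)"

lemma of_nat_add_one_minus_not_nonpos_Int:
  assumes "\<mu> \<notin> \<int>"
  shows "real j + 1 - \<mu> \<notin> \<int>\<^sub>\<le>\<^sub>0"
proof
  assume "real j + 1 - \<mu> \<in> \<int>\<^sub>\<le>\<^sub>0"
  then have "real j + 1 - (real j + 1 - \<mu>) \<in> \<int>"
    by (intro Ints_diff) auto
  with assms show False by simp
qed

lemma RL_hat_eigenvalue_nonzero:
  assumes "\<mu> \<notin> \<int>"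
  shows "RL_hat_eigenvalue \<mu> j \<noteq> 0"
  using of_nat_add_one_minus_not_nonpos_Int[OF assms, of j]
  by (auto simp: RL_hat_eigenvalue_def Gamma_eq_zero_iff elim!: nonpos_Ints_cases)

lemma not_Ints_between_consecutive:
  fixes \<mu> :: real
  assumes "real k - 1 < \<mu>" "\<mu> < real k"
  shows "\<mu> \<notin> \<int>"
proof
  assume "\<mu> \<in> \<int>"
  then obtain m where "\<mu> = of_int m"
    by (auto elim: Ints_cases)
  with assms have "int k - 1 < m" "m < int k"
    by linarith+
  then show False by linarith
qed

lemma RL_hat_deriv_shifted_poly:
  assumes "\<mu> < real k" "\<mu> \<notin> \<int>" "x > -1"
  shows "RL_hat_deriv k \<mu> (poly (shifted_poly N c)) x
    = poly (shifted_poly N (\<lambda>j. RL_hat_eigenvalue \<mu> j * c j)) x"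
proof -
  define \<rho> where "\<rho> = real k - \<mu>"
  have "\<rho> > 0" using assms(1) by (simp add: \<rho>_def)
  have "RL_int \<rho> (poly (shifted_poly N c)) y
      = (\<Sum>j\<le>N. c j * Gamma (real j + 1) / Gamma (real j + 1 + \<rho>) * (1 + y) powr (real j + \<rho>))"
    if "y > -1" for y
    using \<open>\<rho> > 0\<close> that
    by (intro RL_int_sum_powers) (auto simp: poly_shifted_poly powr_realpow)
  then have "(deriv ^^ k) (RL_int \<rho> (poly (shifted_poly N c))) x
      = (\<Sum>j\<le>N. c j * Gamma (real j + 1) / Gamma (real j + 1 + \<rho>)
           * pochhammer (real j + \<rho> - real k + 1) k * (1 + x) powr (real j + \<rho> - real k))"
    using assms(3) by (rule higher_deriv_sum_powers)
  also have "\<dots> = (\<Sum>j\<le>N. RL_hat_eigenvalue \<mu> j * c j * (1 + x) powr (real j - \<mu>))"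
  proof (rule sum.cong[OF refl])
    fix j
    have "pochhammer (real j + 1 - \<mu>) k = Gamma (real j + 1 + \<rho>) / Gamma (real j + 1 - \<mu>)"
      using of_nat_add_one_minus_not_nonpos_Int[OF assms(2)]
      by (simp add: pochhammer_Gamma \<rho>_def algebra_simps)
    moreover have "Gamma (real j + 1 + \<rho>) > 0"
      using \<open>\<rho> > 0\<close> by (intro Gamma_real_pos) simp
    ultimately show "c j * Gamma (real j + 1) / Gamma (real j + 1 + \<rho>)
          * pochhammer (real j + \<rho> - real k + 1) k * (1 + x) powr (real j + \<rho> - real k)
        = RL_hat_eigenvalue \<mu> j * c j * (1 + x) powr (real j - \<mu>)"
      by (simp add: RL_hat_eigenvalue_def \<rho>_def algebra_simps)
  qed
  finally show ?thesis
    using assms(3)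
    by (simp add: RL_hat_deriv_def RL_deriv_def \<rho>_def poly_shifted_poly sum_distrib_left
        powr_realpow[symmetric] mult_ac flip: powr_add)
qed

lemma RL_int_shifted_poly:
  assumes "0 < \<mu>" "\<mu> < 2" "x > -1" "c 0 = 0"
  shows "RL_int \<mu> (\<lambda>y. (1 + y) powr (-\<mu>) * poly (shifted_poly N c) y) x
    = poly (shifted_poly N (\<lambda>j. c j / RL_hat_eigenvalue \<mu> j)) x"
proof -
  \<comment> \<open>\<open>(1 + y) powr (j - \<mu>)\<close> is integrable at \<open>-1\<close> only for \<open>j \<ge> 1\<close>, hence \<open>c 0 = 0\<close>.\<close>
  have drop_0: "(\<Sum>j\<le>N. g j) = (\<Sum>j\<in>{1..N}. g j)" if "g 0 = 0" for g :: "nat \<Rightarrow> real"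
    using that by (intro sum.mono_neutral_right) (auto simp: not_less_eq_eq)
  have "RL_int \<mu> (\<lambda>y. (1 + y) powr (-\<mu>) * poly (shifted_poly N c) y) x
      = (\<Sum>j\<in>{1..N}. c j * Gamma (real j - \<mu> + 1) / Gamma (real j - \<mu> + 1 + \<mu>)
          * (1 + x) powr (real j - \<mu> + \<mu>))"
  proof (rule RL_int_sum_powers)
    fix y :: real assume "y \<in> {-1<..x}"
    then have "(1 + y) powr (-\<mu>) * (1 + y) ^ j = (1 + y) powr (real j - \<mu>)" for j
      by (simp add: powr_realpow[symmetric] flip: powr_add)
    then show "(1 + y) powr (-\<mu>) * poly (shifted_poly N c) y
        = (\<Sum>j\<in>{1..N}. c j * (1 + y) powr (real j - \<mu>))"
      using assms(4) by (simp add: poly_shifted_poly sum_distrib_left drop_0 mult.left_commute)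
  qed (use assms in auto)
  also have "\<dots> = poly (shifted_poly N (\<lambda>j. c j / RL_hat_eigenvalue \<mu> j)) x"
    using assms(3,4)
    by (simp add: poly_shifted_poly drop_0 RL_hat_eigenvalue_def powr_realpow algebra_simps)
  finally show ?thesis .
qed

lemma RL_hat_deriv_poly:
  assumes "\<mu> < real k" "\<mu> \<notin> \<int>" "degree u \<le> N" "x > -1"
  shows "RL_hat_deriv k \<mu> (poly u) x
    = poly (shifted_poly N (\<lambda>j. RL_hat_eigenvalue \<mu> j * shifted_coeff u j)) x"
  using RL_hat_deriv_shifted_poly[OF assms(1,2,4), of N "shifted_coeff u"]
  by (simp add: shifted_poly_shifted_coeff assms(3))

lemma RL_hat_deriv_poly_eq_iff:
  assumes "\<mu> < real k" "\<mu> \<notin> \<int>" "degree u \<le> N" "degree f \<le> N"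
  shows "(\<forall>x\<in>{-1<..<1}. RL_hat_deriv k \<mu> (poly u) x = poly f x)
    \<longleftrightarrow> u = shifted_poly N (\<lambda>j. shifted_coeff f j / RL_hat_eigenvalue \<mu> j)"
proof -
  let ?ev = "RL_hat_eigenvalue \<mu>"
  have "(\<forall>x\<in>{-1<..<1}. RL_hat_deriv k \<mu> (poly u) x = poly f x)
      \<longleftrightarrow> shifted_poly N (\<lambda>j. ?ev j * shifted_coeff u j) = f"
    using RL_hat_deriv_poly[OF assms(1-3)] poly_eqI_on_interval[of "-1" 1] by auto
  also have "\<dots> \<longleftrightarrow> shifted_poly N (\<lambda>j. ?ev j * shifted_coeff u j) = shifted_poly N (shifted_coeff f)"
    by (simp add: shifted_poly_shifted_coeff assms(4))
  also have "\<dots> \<longleftrightarrow> (\<forall>j\<le>N. shifted_coeff u j = shifted_coeff f j / ?ev j)"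
    using RL_hat_eigenvalue_nonzero[OF assms(2)] by (simp add: shifted_poly_eq_iff field_simps)
  also have "\<dots> \<longleftrightarrow> shifted_poly N (shifted_coeff u) = shifted_poly N (\<lambda>j. shifted_coeff f j / ?ev j)"
    by (simp add: shifted_poly_eq_iff)
  finally show ?thesis
    by (simp add: shifted_poly_shifted_coeff assms(3))
qed

lemma RL_hat_deriv_poly_vanishes_at_minus_one_iff:
  assumes "\<mu> < real k" "\<mu> \<notin> \<int>" "degree u \<le> N"
  shows "\<exists>q. (\<forall>x\<in>{-1<..<1}. RL_hat_deriv k \<mu> (poly u) x = poly q x)
    \<and> (poly q (-1) = 0 \<longleftrightarrow> poly u (-1) = 0)"
proof (intro exI conjI)
  let ?q = "shifted_poly N (\<lambda>j. RL_hat_eigenvalue \<mu> j * shifted_coeff u j)"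
  show "\<forall>x\<in>{-1<..<1}. RL_hat_deriv k \<mu> (poly u) x = poly ?q x"
    using RL_hat_deriv_poly[OF assms] by simp
  show "poly ?q (-1) = 0 \<longleftrightarrow> poly u (-1) = 0"
    using RL_hat_eigenvalue_nonzero[OF assms(2), of 0]
    by (simp add: poly_shifted_poly_minus_one shifted_coeff_0)
qed

theorem lemma5p1:
  fixes N k :: nat and \<mu> :: real
  assumes "k \<in> {1, 2}" and "real k - 1 < \<mu>" and "\<mu> < real k"
  shows "(\<forall>f :: real poly. degree f \<le> N \<and> poly f (-1) = 0 \<longrightarrow>
            (\<exists>!u :: real poly. degree u \<le> N \<and> poly u (-1) = 0 \<and>
                 (\<forall>x\<in>{-1<..<1}. RL_hat_deriv k \<mu> (poly u) x = poly f x)) \<and>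
            (\<forall>u :: real poly. degree u \<le> N \<and> poly u (-1) = 0 \<and>
                 (\<forall>x\<in>{-1<..<1}. RL_hat_deriv k \<mu> (poly u) x = poly f x) \<longrightarrow>
               (\<forall>x\<in>{-1<..<1}. poly u x =
                  RL_int \<mu> (\<lambda>y. (1 + y) powr (- \<mu>) * poly f y) x)))
       \<and> (\<forall>u :: real poly. degree u \<le> N \<longrightarrow>
            (\<exists>q :: real poly. (\<forall>x\<in>{-1<..<1}. RL_hat_deriv k \<mu> (poly u) x = poly q x) \<and>
               (poly q (-1) = 0 \<longleftrightarrow> poly u (-1) = 0)))"
proof -
  have \<mu>: "0 < \<mu>" "\<mu> < 2" "\<mu> \<notin> \<int>"
    using assms not_Ints_between_consecutive[OF assms(2,3)] by auto
  have "(\<exists>!u. degree u \<le> N \<and> poly u (-1) = 0 \<and>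
            (\<forall>x\<in>{-1<..<1}. RL_hat_deriv k \<mu> (poly u) x = poly f x)) \<and>
        (\<forall>u. degree u \<le> N \<and> poly u (-1) = 0 \<and>
            (\<forall>x\<in>{-1<..<1}. RL_hat_deriv k \<mu> (poly u) x = poly f x) \<longrightarrow>
          (\<forall>x\<in>{-1<..<1}. poly u x = RL_int \<mu> (\<lambda>y. (1 + y) powr (- \<mu>) * poly f y) x))"
    if f: "degree f \<le> N" "poly f (-1) = 0" for f
  proof -
    define u\<^sub>0 where "u\<^sub>0 = shifted_poly N (\<lambda>j. shifted_coeff f j / RL_hat_eigenvalue \<mu> j)"
    have solves_iff: "(\<forall>x\<in>{-1<..<1}. RL_hat_deriv k \<mu> (poly u) x = poly f x) \<longleftrightarrow> u = u\<^sub>0"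
      if "degree u \<le> N" for u
      unfolding u\<^sub>0_def using RL_hat_deriv_poly_eq_iff[OF assms(3) \<mu>(3) that f(1)] .
    have "degree u\<^sub>0 \<le> N" "poly u\<^sub>0 (-1) = 0"
      by (simp_all add: u\<^sub>0_def degree_shifted_poly_le poly_shifted_poly_minus_one shifted_coeff_0 f)
    moreover have "poly u\<^sub>0 x = RL_int \<mu> (\<lambda>y. (1 + y) powr (- \<mu>) * poly f y) x" if "x > -1" for x
      using RL_int_shifted_poly[OF \<mu>(1,2) that, of "shifted_coeff f" N]
      by (simp add: u\<^sub>0_def shifted_poly_shifted_coeff shifted_coeff_0 f)
    ultimately show ?thesis
      using solves_iff by auto
  qed
  then show ?thesis
    using RL_hat_deriv_poly_vanishes_at_minus_one_iff[OF assms(3) \<mu>(3)] by blast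
qed

end
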